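(* Let $\Pi$ be a min-FGPP with $\alpha_1\ge0$ and $\alpha_2>0$. Let $(G=(V,E),k,p)$ be an instance of $\Pi$, write $V=\{v_1,\dots,v_{|V|}\}$, and let $\mathcal{F}$ be a $(|V|,k+\frac{p}{\alpha_2})$-universal set. For each $f\in\mathcal{F}$ let $G_f$ be a copy of $G$ in which the copy of $v_i$ is colored red if $f(i)=0$ and blue if $f(i)=1$. Then $(G,k,p)$ is a yes-instance of $\Pi$ if and only if at least one of the instances $(G_f,k,p)$, $f\in\mathcal{F}$, is a yes-instance of NC-$\Pi$.
   Context: Graphs are finite, simple and undirected. For $X\subseteq V$, $E(X)$ is the set of edges with both endpoints in $X$, $E(X,V\setminus X)$ the set of edges with exactly one endpoint in $X$, and $\mathrm{val}(X)=\alpha_1|E(X)|+\alpha_2|E(X,V\setminus X)|$. The min-FGPP $\Pi$: given $G=(V,E)$, $k\in\mathbb{N}$, $p\in\mathbb{R}$, decide whether some $X\subseteq V$ with $|X|=k$ has $\mathrm{val}(X)\le p$. NC-$\Pi$: given a graph $G=(V,E)$ each of whose nodes is colored red or blue, $k\in\mathbb{N}$ and $p\in\mathbb{R}$, decide whether there is $X\subseteq V$ consisting of exactly $k$ red nodes and no blue nodes, such that every node outside $X$ adjacent to a node of $X$ is blue, and $\mathrm{val}(X)\le p$. For real $t\ge0$, a set $\mathcal{F}$ of functions $\{1,\dots,n\}\to\{0,1\}$ is an $(n,t)$-universal set if for every $I\subseteq\{1,\dots,n\}$ with $|I|\le t$ and every $f':I\to\{0,1\}$ there is $f\in\mathcal{F}$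 with $f(i)=f'(i)$ for all $i\in I$. *)

theory Defs
  imports Complex_Main
begin

definition simple_graph :: "'a set \<Rightarrow> 'a set set \<Rightarrow> bool" where
  "simple_graph V E \<longleftrightarrow> finite V \<and> (\<forall>e\<in>E. e \<subseteq> V \<and> card e = 2)"

definition inner_edges :: "'a set set \<Rightarrow> 'a set \<Rightarrow> 'a set set" where
  "inner_edges E X = {e \<in> E. e \<subseteq> X}"

definition cut_edges :: "'a set set \<Rightarrow> 'a set \<Rightarrow> 'a set set" where
  "cut_edges E X = {e \<in> E. card (e \<inter> X) = 1}"

definition fgpp_val :: "real \<Rightarrow> real \<Rightarrow> 'a set set \<Rightarrow> 'a set \<Rightarrow> real" where
  "fgpp_val a1 a2 E X = a1 * real (card (inner_edges E X)) + a2 * real (card (cut_edges E X))"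

definition fgpp_yes :: "real \<Rightarrow> real \<Rightarrow> 'a set \<Rightarrow> 'a set set \<Rightarrow> nat \<Rightarrow> real \<Rightarrow> bool" where
  "fgpp_yes a1 a2 V E k p \<longleftrightarrow>
     (\<exists>X. X \<subseteq> V \<and> card X = k \<and> fgpp_val a1 a2 E X \<le> p)"

text \<open>Yes-instance of NC-\<Pi>: Red is the set of red nodes, V - Red the blue nodes.\<close>
definition nc_fgpp_yes :: "real \<Rightarrow> real \<Rightarrow> 'a set \<Rightarrow> 'a set set \<Rightarrow> 'a set \<Rightarrow> nat \<Rightarrow> real \<Rightarrow> bool" where
  "nc_fgpp_yes a1 a2 V E Red k p \<longleftrightarrow>
     (\<exists>X. X \<subseteq> V \<and> X \<subseteq> Red \<and> card X = k \<and>
          (\<forall>u \<in> V - X. (\<exists>x\<in>X. {u, x} \<in> E) \<longrightarrow> u \<in> V - Red) \<and>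
          fgpp_val a1 a2 E X \<le> p)"

text \<open>(n,t)-universal set of functions {1..n} -> {0,1} (values outside {1..n} irrelevant).\<close>
definition universal_set :: "nat \<Rightarrow> real \<Rightarrow> (nat \<Rightarrow> nat) set \<Rightarrow> bool" where
  "universal_set n t F \<longleftrightarrow>
     (\<forall>f\<in>F. \<forall>i\<in>{1..n}. f i \<in> {0,1}) \<and>
     (\<forall>I g. I \<subseteq> {1..n} \<and> real (card I) \<le> t \<and> (\<forall>i\<in>I. g i \<in> {0::nat,1}) \<longrightarrow>
        (\<exists>f\<in>F. \<forall>i\<in>I. f i = g i))"

definition red_nodes :: "(nat \<Rightarrow> 'a) \<Rightarrow> nat \<Rightarrow> (nat \<Rightarrow> nat) \<Rightarrow> 'a set" where
  "red_nodes v n f = {v i | i. i \<in> {1..n} \<and> f i = 0}"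

end

theory Submission
  imports Defs
begin

text \<open>If \<open>X\<close> witnesses a yes-instance, every node of its open neighbourhood \<open>N(X)\<close> is the
  outer endpoint of some cut edge, so \<open>|N(X)| \<le> |E(X, V - X)| \<le> p / \<alpha>\<^sub>2\<close>. Hence
  \<open>X \<union> N(X)\<close> has at most \<open>k + p / \<alpha>\<^sub>2\<close> nodes and the universal set contains a colouring that
  makes \<open>X\<close> red and \<open>N(X)\<close> blue; in that colouring \<open>X\<close> solves NC-\<Pi>.\<close>

definition neighbourhood :: "'a set set \<Rightarrow> 'a set \<Rightarrow> 'a set" where
  "neighbourhood E X = {u. u \<notin> X \<and> (\<exists>x\<in>X. {u, x} \<in> E)}"

lemma neighbourhood_subset_outer_endpoints:
  "neighbourhood E X \<subseteq> (\<lambda>e. the_elem (e - X)) ` cut_edges E X"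
proof
  fix u assume "u \<in> neighbourhood E X"
  then obtain x where u: "u \<notin> X" and x: "x \<in> X" and ux: "{u, x} \<in> E"
    by (auto simp: neighbourhood_def)
  have "{u, x} \<inter> X = {x}" "{u, x} - X = {u}" using u x by auto
  then have "{u, x} \<in> cut_edges E X" "u = the_elem ({u, x} - X)"
    using ux by (simp_all add: cut_edges_def)
  then show "u \<in> (\<lambda>e. the_elem (e - X)) ` cut_edges E X" by blast
qed

lemma card_neighbourhood_le_card_cut_edges:
  assumes "finite E"
  shows "card (neighbourhood E X) \<le> card (cut_edges E X)"
proof -
  have "finite (cut_edges E X)" using assms by (simp add: cut_edges_def)
  then show ?thesis
    by (meson card_image_le card_mono finite_imageI neighbourhood_subset_outer_endpoints
        order_trans)
qed

lemma card_cut_edges_le_fgpp_val: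
  assumes "a1 \<ge> 0" and "a2 > 0" and "fgpp_val a1 a2 E X \<le> p"
  shows "real (card (cut_edges E X)) \<le> p / a2"
proof -
  have "a2 * real (card (cut_edges E X)) \<le> p"
    using assms unfolding fgpp_val_def by (smt (verit) of_nat_0_le_iff zero_le_mult_iff)
  then show ?thesis using assms(2) by (simp add: field_simps)
qed

lemma red_nodes_iff:
  assumes "inj_on v {1..n}" and "i \<in> {1..n}"
  shows "v i \<in> red_nodes v n f \<longleftrightarrow> f i = 0"
  using assms unfolding red_nodes_def inj_on_def by blast

lemma card_preimage_bij_betw:
  assumes "bij_betw v A V" and "S \<subseteq> V"
  shows "card {i \<in> A. v i \<in> S} = card S"
proof -
  have "inj_on v {i \<in> A. v i \<in> S}"
    using assms(1) by (auto simp: bij_betw_def intro: inj_on_subset)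
  moreover have "v ` {i \<in> A. v i \<in> S} = S"
    using assms by (auto simp: bij_betw_def)
  ultimately show ?thesis by (metis card_image)
qed

lemma universal_set_separates:
  assumes "universal_set n t F" and "bij_betw v {1..n} V"
    and "R \<subseteq> V" and "B \<subseteq> V" and "R \<inter> B = {}" and "finite V"
    and "real (card R + card B) \<le> t"
  obtains f where "f \<in> F" and "R \<subseteq> red_nodes v n f" and "B \<inter> red_nodes v n f = {}"
proof -
  define I where "I = {i \<in> {1..n}. v i \<in> R \<union> B}"
  define g where "g i = (if v i \<in> R then 0 else 1 :: nat)" for i
  have "card I = card R + card B"
    using card_preimage_bij_betw[OF assms(2), of "R \<union> B"] assms(3-6)
    by (simp add: I_def card_Un_disjoint finite_subset)
  then have "I \<subseteq> {1..n}" "real (card I) \<le> t" "\<forall>i\<in>I. g i \<in> {0, 1}"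
    using assms(7) by (auto simp: I_def g_def)
  then obtain f where f: "f \<in> F" "\<forall>i\<in>I. f i = g i"
    using assms(1) unfolding universal_set_def by blast
  have inj: "inj_on v {1..n}" using assms(2) by (simp add: bij_betw_def)
  have colour: "v i \<in> red_nodes v n f \<longleftrightarrow> v i \<in> R" if "i \<in> {1..n}" "v i \<in> R \<union> B" for i
    using that f(2) red_nodes_iff[OF inj] assms(5) by (auto simp: I_def g_def)
  have "\<exists>i\<in>{1..n}. v i = u" if "u \<in> R \<union> B" for u
    using that assms(2-4) by (auto simp: bij_betw_def)
  then have "R \<subseteq> red_nodes v n f" "B \<inter> red_nodes v n f = {}"
    using colour assms(5) by blast+
  with f(1) show thesis by (rule that)
qed

theorem lemma11:
  fixes a1 a2 p :: real and k :: nat and V :: "'a set" and E :: "'a set set"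
    and v :: "nat \<Rightarrow> 'a" and F :: "(nat \<Rightarrow> nat) set"
  assumes "a1 \<ge> 0" and "a2 > 0"
    and "simple_graph V E"
    and "bij_betw v {1..card V} V"
    and "universal_set (card V) (real k + p / a2) F"
  shows "fgpp_yes a1 a2 V E k p \<longleftrightarrow>
         (\<exists>f\<in>F. nc_fgpp_yes a1 a2 V E (red_nodes v (card V) f) k p)"
proof
  assume "fgpp_yes a1 a2 V E k p"
  then obtain X where X: "X \<subseteq> V" "card X = k" "fgpp_val a1 a2 E X \<le> p"
    unfolding fgpp_yes_def by blast
  have "finite V" and "E \<subseteq> Pow V" using assms(3) by (auto simp: simple_graph_def)
  then have "finite E" by (meson finite_Pow_iff finite_subset)
  let ?N = "neighbourhood E X"
  have "?N \<subseteq> V" using \<open>E \<subseteq> Pow V\<close> by (auto simp: neighbourhood_def)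
  have "real (card ?N) \<le> p / a2"
    using card_neighbourhood_le_card_cut_edges[OF \<open>finite E\<close>, of X]
      card_cut_edges_le_fgpp_val[OF assms(1,2) X(3)] by linarith
  with X(2) obtain f where "f \<in> F" "X \<subseteq> red_nodes v (card V) f"
      "?N \<inter> red_nodes v (card V) f = {}"
    using universal_set_separates[OF assms(5,4) X(1) \<open>?N \<subseteq> V\<close>] \<open>finite V\<close>
    by (auto simp: neighbourhood_def)
  then show "\<exists>f\<in>F. nc_fgpp_yes a1 a2 V E (red_nodes v (card V) f) k p"
    using X unfolding nc_fgpp_yes_def neighbourhood_def by blast
qed (auto simp: nc_fgpp_yes_def fgpp_yes_def)

end
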